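(* Let $\mathfrak S$ be a commutative semiring. The set of all proper ideals, the set of all finitely generated (proper) ideals, and the set of all principal (proper) ideals of $\mathfrak S$, each endowed with the ideal topology, are connected spaces.
   Context: A semiring $(\mathfrak S,+,0,\cdot,1)$ has $(\mathfrak S,+,0)$ a commutative monoid, $(\mathfrak S,\cdot,1)$ a monoid, $0r=r0=0$, and two-sided distributivity; all semirings are commutative. An ideal is a nonempty proper subset closed under addition and under multiplication by elements of $\mathfrak S$. For a set $\sigma_{\mathfrak S}$ of ideals and an ideal $\mathfrak a$, $\mathfrak a^{\uparrow}=\{\mathfrak x\in\sigma_{\mathfrak S}\mid\mathfrak a\subseteq\mathfrak x\}$; the ideal topology on $\sigma_{\mathfrak S}$ has these sets as a subbasis of closed sets. *)

theory Defs
  imports "HOL-Analysis.Analysis"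
begin

text \<open>Commutative semirings: type class combination {comm_semiring_0, comm_monoid_mult}
  (commutative additive monoid, commutative multiplicative monoid with 1,
  0 absorbing, distributivity; 0 = 1 is allowed).\<close>

definition sr_ideal :: "'a::{comm_semiring_0,comm_monoid_mult} set \<Rightarrow> bool" where
  "sr_ideal I \<longleftrightarrow> I \<noteq> {} \<and> I \<noteq> UNIV \<and>
     (\<forall>x\<in>I. \<forall>y\<in>I. x + y \<in> I) \<and> (\<forall>r x. x \<in> I \<longrightarrow> r * x \<in> I)"

definition sr_span :: "'a::{comm_semiring_0,comm_monoid_mult} set \<Rightarrow> 'a set" where
  "sr_span X = {(\<Sum>x\<in>X. r x * x) | r. True}"

definition sr_fg_ideal :: "'a::{comm_semiring_0,comm_monoid_mult} set \<Rightarrow> bool" where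
  "sr_fg_ideal I \<longleftrightarrow> sr_ideal I \<and> (\<exists>X. finite X \<and> I = sr_span X)"

definition sr_principal_ideal :: "'a::{comm_semiring_0,comm_monoid_mult} set \<Rightarrow> bool" where
  "sr_principal_ideal I \<longleftrightarrow> sr_ideal I \<and> (\<exists>a. I = {r * a | r. True})"

definition up_set :: "'a set set \<Rightarrow> 'a set \<Rightarrow> 'a set set" where
  "up_set \<sigma> a = {x \<in> \<sigma>. a \<subseteq> x}"

text \<open>Ideal topology on \<sigma>: the sets a\<up> (a an ideal) form a subbasis of closed sets,
  i.e. their complements in \<sigma> (together with \<sigma> itself) form a subbasis of open sets.\<close>
definition ideal_topology :: "'a::{comm_semiring_0,comm_monoid_mult} set set \<Rightarrow> 'a set topology" where
  "ideal_topology \<sigma> = topology_generated_by (insert \<sigma> {\<sigma> - up_set \<sigma> a | a. sr_ideal a})"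

end

theory Submission
  imports Defs
begin

text \<open>The zero ideal lies in every ideal, so it avoids a subbasic closed set \<open>a\<up>\<close> unless
  \<open>a = {0}\<close>, in which case \<open>a\<up>\<close> is the whole space. Hence every nonempty open set contains
  the zero ideal, and no two nonempty open sets are disjoint.\<close>

lemma generate_topology_on_empty_or_mem:
  assumes "\<And>s. s \<in> S \<Longrightarrow> s = {} \<or> z \<in> s" and "generate_topology_on S U"
  shows "U = {} \<or> z \<in> U"
  using assms(2)
proof (induction rule: generate_topology_on.induct)
  case (UN K)
  then show ?case by blast
next
  case (Basis s)
  then show ?case using assms(1) by blast
qed auto

lemma connected_space_if_open_mem:
  assumes "\<And>U. openin X U \<Longrightarrow> U = {} \<or> z \<in> U"
  shows "connected_space X"
  unfolding connected_space_def using assms by blast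

lemma sr_ideal_zero: "sr_ideal I \<Longrightarrow> 0 \<in> I"
  unfolding sr_ideal_def by (metis all_not_in_conv mult_zero_left)

lemma sr_ideal_zero_ideal:
  assumes "sr_ideal (I :: 'a::{comm_semiring_0,comm_monoid_mult} set)"
  shows "sr_ideal {0 :: 'a}"
proof -
  obtain y where "y \<notin> I"
    using assms unfolding sr_ideal_def by auto
  with sr_ideal_zero[OF assms] have "y \<noteq> 0" by auto
  then have "{0} \<noteq> (UNIV :: 'a set)" by auto
  then show ?thesis unfolding sr_ideal_def by simp
qed

lemma sr_fg_ideal_zero_ideal:
  "sr_ideal (I :: 'a::{comm_semiring_0,comm_monoid_mult} set) \<Longrightarrow> sr_fg_ideal {0 :: 'a}"
  unfolding sr_fg_ideal_def
  by (auto intro!: sr_ideal_zero_ideal[of I] exI[of _ "{}"] simp: sr_span_def)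

lemma sr_principal_ideal_zero_ideal:
  "sr_ideal (I :: 'a::{comm_semiring_0,comm_monoid_mult} set) \<Longrightarrow> sr_principal_ideal {0 :: 'a}"
  unfolding sr_principal_ideal_def
  by (auto intro!: sr_ideal_zero_ideal[of I] exI[of _ 0])

lemma up_set_zero_ideal:
  assumes "\<sigma> \<subseteq> Collect sr_ideal"
  shows "up_set \<sigma> {0} = \<sigma>"
  using assms sr_ideal_zero unfolding up_set_def by blast

lemma openin_ideal_topology_zero_ideal:
  fixes \<sigma> :: "'a::{comm_semiring_0,comm_monoid_mult} set set"
  assumes "\<sigma> \<subseteq> Collect sr_ideal" and "\<sigma> \<noteq> {} \<Longrightarrow> {0} \<in> \<sigma>"
    and "openin (ideal_topology \<sigma>) U"
  shows "U = {} \<or> {0} \<in> U"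
proof -
  have "s = {} \<or> {0} \<in> s" if s: "s \<in> insert \<sigma> {\<sigma> - up_set \<sigma> a | a. sr_ideal a}" for s
  proof -
    consider "s = \<sigma>" | a where "sr_ideal a" "s = \<sigma> - up_set \<sigma> a"
      using s by blast
    then show ?thesis
    proof cases
      case 1
      then show ?thesis using assms(2) by blast
    next
      case 2
      show ?thesis
      proof (cases "a = {0}")
        case True
        then show ?thesis using 2 up_set_zero_ideal[OF assms(1)] by simp
      next
        case False
        then have "\<not> a \<subseteq> {0}" using sr_ideal_zero[OF 2(1)] by blast
        then show ?thesis using 2 assms(2) unfolding up_set_def by auto
      qed
    qed
  qed
  then show ?thesis
    using assms(3) unfolding ideal_topology_def openin_topology_generated_by_iff
    by (rule generate_topology_on_empty_or_mem)
qed

lemma connected_space_ideal_topology: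
  fixes \<sigma> :: "'a::{comm_semiring_0,comm_monoid_mult} set set"
  assumes "\<sigma> \<subseteq> Collect sr_ideal" and "\<sigma> \<noteq> {} \<Longrightarrow> {0} \<in> \<sigma>"
  shows "connected_space (ideal_topology \<sigma>)"
  using openin_ideal_topology_zero_ideal[OF assms] by (rule connected_space_if_open_mem)

theorem corollary3p14:
  shows "connected_space (ideal_topology {I :: 'a::{comm_semiring_0,comm_monoid_mult} set. sr_ideal I})
       \<and> connected_space (ideal_topology {I :: 'a set. sr_fg_ideal I})
       \<and> connected_space (ideal_topology {I :: 'a set. sr_principal_ideal I})"
proof (intro conjI connected_space_ideal_topology)
  show "{I :: 'a set. sr_fg_ideal I} \<subseteq> Collect sr_ideal"
    and "{I :: 'a set. sr_principal_ideal I} \<subseteq> Collect sr_ideal"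
    by (auto simp: sr_fg_ideal_def sr_principal_ideal_def)
  show "{0} \<in> {I :: 'a set. sr_ideal I}" if "{I :: 'a set. sr_ideal I} \<noteq> {}"
    using that sr_ideal_zero_ideal by auto
  show "{0} \<in> {I :: 'a set. sr_fg_ideal I}" if "{I :: 'a set. sr_fg_ideal I} \<noteq> {}"
    using that sr_fg_ideal_zero_ideal by (auto simp: sr_fg_ideal_def)
  show "{0} \<in> {I :: 'a set. sr_principal_ideal I}" if "{I :: 'a set. sr_principal_ideal I} \<noteq> {}"
    using that sr_principal_ideal_zero_ideal by (auto simp: sr_principal_ideal_def)
qed simp

end
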